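(* Let $\Pi$ be a finite nonempty set of policies, $\Theta^T$ a finite nonempty set of environment parameterizations, and $U^{\vec\theta}(\pi)\in\mathbb{R}$ the utility of $\pi$ under $\vec\theta$. Then there exists an environment policy $\Lambda:\Pi\to\Delta(\Theta^T)$ such that $$\arg\max_{\pi\in\Pi}\ \mathbb{E}_{\vec\theta\sim\Lambda(\pi)}\big[U^{\vec\theta}(\pi)\big]=\textsc{MinimaxRegret}.$$
   Context: $\Delta(\Theta^T)$ denotes the set of probability distributions on $\Theta^T$. Regret: $\textsc{Regret}(\pi,\vec\theta)=\max_{\pi^B\in\Pi}\{U^{\vec\theta}(\pi^B)-U^{\vec\theta}(\pi)\}$. Minimax regret policies: $\textsc{MinimaxRegret}=\arg\min_{\pi\in\Pi}\max_{\vec\theta\in\Theta^T}\textsc{Regret}(\pi,\vec\theta)$. *)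

theory Defs
  imports "HOL-Probability.Probability"
begin

definition regret :: "'p set \<Rightarrow> ('t \<Rightarrow> 'p \<Rightarrow> real) \<Rightarrow> 'p \<Rightarrow> 't \<Rightarrow> real" where
  "regret Pol U p th = Max ((\<lambda>pB. U th pB - U th p) ` Pol)"

definition max_regret :: "'p set \<Rightarrow> 't set \<Rightarrow> ('t \<Rightarrow> 'p \<Rightarrow> real) \<Rightarrow> 'p \<Rightarrow> real" where
  "max_regret Pol Theta U p = Max (regret Pol U p ` Theta)"

definition minimax_regret :: "'p set \<Rightarrow> 't set \<Rightarrow> ('t \<Rightarrow> 'p \<Rightarrow> real) \<Rightarrow> 'p set" where
  "minimax_regret Pol Theta U =
     {p \<in> Pol. \<forall>q \<in> Pol. max_regret Pol Theta U p \<le> max_regret Pol Theta U q}"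

definition arg_max_set :: "'p set \<Rightarrow> ('p \<Rightarrow> real) \<Rightarrow> 'p set" where
  "arg_max_set Pol f = {p \<in> Pol. \<forall>q \<in> Pol. f q \<le> f p}"

end

theory Submission
  imports Defs
begin

text \<open>Let \<open>M\<close> be the set of minimax-regret policies and let \<open>c\<close> be the smallest best-case
utility \<open>max\<^sub>\<theta> U\<^sup>\<theta>(\<pi>)\<close> over \<open>\<pi> \<in> M\<close>, attained by \<open>\<pi>\<^sub>1\<close>. Every \<open>\<pi> \<in> M\<close> has worst-case utility
at most \<open>c\<close>: otherwise \<open>\<pi>\<close> strictly dominates \<open>\<pi>\<^sub>1\<close> in every environment and so has strictly
smaller maximal regret. Every \<open>\<pi> \<notin> M\<close> has worst-case utility below \<open>c\<close>: otherwise \<open>\<pi>\<close> weakly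
dominates \<open>\<pi>\<^sub>1\<close> and would be minimax-regret itself. So the environment can give each \<open>\<pi> \<in> M\<close>
expected utility exactly \<open>c\<close> by mixing its worst and best environments, and each \<open>\<pi> \<notin> M\<close>
its worst environment, whose utility is below \<open>c\<close>.\<close>

lemma pmf_with_expectation_between:
  fixes g :: "'t \<Rightarrow> real"
  assumes "g t1 \<le> x" "x \<le> g t2"
  shows "\<exists>M. set_pmf M \<subseteq> {t1, t2} \<and> measure_pmf.expectation M g = x"
proof (cases "g t1 = g t2")
  case True
  then have "x = g t1" using assms by linarith
  then show ?thesis by (intro exI[of _ "return_pmf t1"]) auto
next
  case False
  define l where "l = (g t2 - x) / (g t2 - g t1)"
  have gap: "g t2 - g t1 > 0" using assms False by linarith
  have "0 \<le> l" "l \<le> 1" using assms gap by (auto simp: l_def field_simps)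
  let ?M = "map_pmf (\<lambda>b. if b then t1 else t2) (bernoulli_pmf l)"
  have "measure_pmf.expectation ?M g = g t2 - l * (g t2 - g t1)"
    using \<open>0 \<le> l\<close> \<open>l \<le> 1\<close> by (simp add: algebra_simps)
  also have "l * (g t2 - g t1) = g t2 - x" using gap by (simp add: l_def)
  finally show ?thesis by (intro exI[of _ ?M]) auto
qed

lemma regret_attained:
  assumes "finite Pol" "Pol \<noteq> {}"
  obtains q where "q \<in> Pol" "regret Pol U p t = U t q - U t p"
proof -
  have "regret Pol U p t \<in> (\<lambda>pB. U t pB - U t p) ` Pol"
    unfolding regret_def using assms by (intro Max_in) auto
  then show ?thesis using that by blast
qed

lemma regret_ge:
  assumes "finite Pol" "q \<in> Pol"
  shows "U t q - U t p \<le> regret Pol U p t"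
  unfolding regret_def using assms by (intro Max_ge) auto

lemma regret_mono:
  assumes "finite Pol" "U t a \<le> U t p"
  shows "regret Pol U p t \<le> regret Pol U a t"
proof (cases "Pol = {}")
  case True then show ?thesis by (simp add: regret_def)
next
  case False
  obtain q where "q \<in> Pol" "regret Pol U p t = U t q - U t p"
    using assms(1) False by (rule regret_attained)
  with regret_ge[OF assms(1) \<open>q \<in> Pol\<close>, where t=t and p=a and U=U] assms(2) show ?thesis by linarith
qed

lemma regret_strict_mono:
  assumes "finite Pol" "Pol \<noteq> {}" "U t a < U t p"
  shows "regret Pol U p t < regret Pol U a t"
proof -
  obtain q where "q \<in> Pol" "regret Pol U p t = U t q - U t p"
    using assms(1,2) by (rule regret_attained)
  with regret_ge[OF assms(1) \<open>q \<in> Pol\<close>, where t=t and p=a and U=U] assms(3) show ?thesis by linarith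
qed

lemma max_regret_attained:
  assumes "finite Theta" "Theta \<noteq> {}"
  obtains t where "t \<in> Theta" "max_regret Pol Theta U p = regret Pol U p t"
proof -
  have "max_regret Pol Theta U p \<in> regret Pol U p ` Theta"
    unfolding max_regret_def using assms by (intro Max_in) auto
  then show ?thesis using that by blast
qed

lemma max_regret_ge:
  assumes "finite Theta" "t \<in> Theta"
  shows "regret Pol U p t \<le> max_regret Pol Theta U p"
  unfolding max_regret_def using assms by (intro Max_ge) auto

lemma max_regret_dominated:
  assumes "finite Pol" "finite Theta" "Theta \<noteq> {}"
    and "\<And>t. t \<in> Theta \<Longrightarrow> U t a \<le> U t p"
  shows "max_regret Pol Theta U p \<le> max_regret Pol Theta U a"
proof -
  obtain t where t: "t \<in> Theta" "max_regret Pol Theta U p = regret Pol U p t"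
    using assms(2,3) by (rule max_regret_attained)
  have "regret Pol U p t \<le> regret Pol U a t" using assms t by (intro regret_mono) auto
  with max_regret_ge[OF assms(2) t(1), where Pol=Pol and U=U and p=a] t show ?thesis by linarith
qed

lemma max_regret_strictly_dominated:
  assumes "finite Pol" "Pol \<noteq> {}" "finite Theta" "Theta \<noteq> {}"
    and "\<And>t. t \<in> Theta \<Longrightarrow> U t a < U t p"
  shows "max_regret Pol Theta U p < max_regret Pol Theta U a"
proof -
  obtain t where t: "t \<in> Theta" "max_regret Pol Theta U p = regret Pol U p t"
    using assms(3,4) by (rule max_regret_attained)
  have "regret Pol U p t < regret Pol U a t" using assms t by (intro regret_strict_mono) auto
  with max_regret_ge[OF assms(3) t(1), where Pol=Pol and U=U and p=a] t show ?thesis by linarith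
qed

lemma minimax_regret_subset: "minimax_regret Pol Theta U \<subseteq> Pol"
  unfolding minimax_regret_def by auto

lemma minimax_regret_nonempty:
  assumes "finite Pol" "Pol \<noteq> {}"
  shows "minimax_regret Pol Theta U \<noteq> {}"
proof -
  obtain a where "a \<in> Pol" "\<forall>q \<in> Pol. max_regret Pol Theta U a \<le> max_regret Pol Theta U q"
    using arg_min_if_finite[OF assms, of "max_regret Pol Theta U"] by (meson not_le)
  then show ?thesis unfolding minimax_regret_def by blast
qed

lemma minimax_regret_separating_level:
  fixes U :: "'t \<Rightarrow> 'p \<Rightarrow> real"
  assumes "finite Pol" "Pol \<noteq> {}" "finite Theta" "Theta \<noteq> {}"
  defines "M \<equiv> minimax_regret Pol Theta U"
  obtains c where
    "\<And>p. p \<in> M \<Longrightarrow> \<exists>t \<in> Theta. U t p \<le> c"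
    "\<And>p. p \<in> M \<Longrightarrow> \<exists>t \<in> Theta. c \<le> U t p"
    "\<And>p. p \<in> Pol \<Longrightarrow> p \<notin> M \<Longrightarrow> \<exists>t \<in> Theta. U t p < c"
proof -
  define MR where "MR = max_regret Pol Theta U"
  define best where "best p = Max ((\<lambda>t. U t p) ` Theta)" for p
  have best_ge: "t \<in> Theta \<Longrightarrow> U t p \<le> best p" for t p
    unfolding best_def using assms(3) by (intro Max_ge) auto
  have best_attained: "\<exists>t \<in> Theta. best p = U t p" for p
  proof -
    have "best p \<in> (\<lambda>t. U t p) ` Theta"
      unfolding best_def using assms(3,4) by (intro Max_in) auto
    then show ?thesis by blast
  qed
  have "finite M" unfolding M_def using minimax_regret_subset assms(1) by (rule finite_subset)
  moreover have "M \<noteq> {}" unfolding M_def using assms(1,2) by (rule minimax_regret_nonempty)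
  ultimately obtain a1 where a1: "a1 \<in> M" "\<And>b. b \<in> M \<Longrightarrow> best a1 \<le> best b"
    using arg_min_if_finite[of M best] by (meson not_le)
  have inM: "p \<in> M \<longleftrightarrow> p \<in> Pol \<and> (\<forall>q \<in> Pol. MR p \<le> MR q)" for p
    unfolding M_def minimax_regret_def MR_def by auto
  show ?thesis
  proof
    fix b assume "b \<in> M"
    show "\<exists>t \<in> Theta. U t b \<le> best a1"
    proof (rule ccontr)
      assume "\<not> ?thesis"
      then have "MR b < MR a1"
        unfolding MR_def using assms best_ge[of _ a1]
        by (intro max_regret_strictly_dominated) force+
      with inM \<open>b \<in> M\<close> a1(1) show False by fastforce
    qed
    show "\<exists>t \<in> Theta. best a1 \<le> U t b" using best_attained a1(2) \<open>b \<in> M\<close> by metis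
  next
    fix p assume "p \<in> Pol" "p \<notin> M"
    show "\<exists>t \<in> Theta. U t p < best a1"
    proof (rule ccontr)
      assume "\<not> ?thesis"
      then have "MR p \<le> MR a1"
        unfolding MR_def using assms best_ge[of _ a1]
        by (intro max_regret_dominated) force+
      with inM \<open>p \<in> Pol\<close> \<open>p \<notin> M\<close> a1(1) show False by fastforce
    qed
  qed
qed

lemma arg_max_set_eq_level_set:
  assumes "M \<subseteq> Pol" "M \<noteq> {}"
    and "\<And>p. p \<in> M \<Longrightarrow> f p = c" "\<And>p. p \<in> Pol \<Longrightarrow> p \<notin> M \<Longrightarrow> f p < c"
  shows "arg_max_set Pol f = M"
proof -
  obtain m where "m \<in> M" using assms(2) by blast
  have "p \<notin> arg_max_set Pol f" if "p \<in> Pol" "p \<notin> M" for p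
    using assms \<open>m \<in> M\<close> that unfolding arg_max_set_def by fastforce
  moreover have "M \<subseteq> arg_max_set Pol f"
    using assms unfolding arg_max_set_def by (fastforce simp: not_less[symmetric])
  ultimately show ?thesis unfolding arg_max_set_def by blast
qed

theorem theorem4:
  fixes Pol :: "'p set" and Theta :: "'t set" and U :: "'t \<Rightarrow> 'p \<Rightarrow> real"
  assumes "finite Pol" "Pol \<noteq> {}" "finite Theta" "Theta \<noteq> {}"
  shows "\<exists>Lambda :: 'p \<Rightarrow> 't pmf.
           (\<forall>p \<in> Pol. set_pmf (Lambda p) \<subseteq> Theta) \<and>
           arg_max_set Pol (\<lambda>p. measure_pmf.expectation (Lambda p) (\<lambda>th. U th p))
             = minimax_regret Pol Theta U"
proof -
  define M where "M = minimax_regret Pol Theta U"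
  obtain c where
    low: "\<And>p. p \<in> M \<Longrightarrow> \<exists>t \<in> Theta. U t p \<le> c" and
    high: "\<And>p. p \<in> M \<Longrightarrow> \<exists>t \<in> Theta. c \<le> U t p" and
    below: "\<And>p. p \<in> Pol \<Longrightarrow> p \<notin> M \<Longrightarrow> \<exists>t \<in> Theta. U t p < c"
    using minimax_regret_separating_level[OF assms] unfolding M_def by blast
  have "\<forall>p \<in> Pol. \<exists>L. set_pmf L \<subseteq> Theta \<and>
          (p \<in> M \<longrightarrow> measure_pmf.expectation L (\<lambda>t. U t p) = c) \<and>
          (p \<notin> M \<longrightarrow> measure_pmf.expectation L (\<lambda>t. U t p) < c)"
  proof
    fix p assume "p \<in> Pol"
    show "\<exists>L. set_pmf L \<subseteq> Theta \<and>
          (p \<in> M \<longrightarrow> measure_pmf.expectation L (\<lambda>t. U t p) = c) \<and>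
          (p \<notin> M \<longrightarrow> measure_pmf.expectation L (\<lambda>t. U t p) < c)"
    proof (cases "p \<in> M")
      case True
      obtain t1 where "t1 \<in> Theta" "U t1 p \<le> c" using low True by blast
      obtain t2 where "t2 \<in> Theta" "c \<le> U t2 p" using high True by blast
      obtain L where "set_pmf L \<subseteq> {t1, t2}" "measure_pmf.expectation L (\<lambda>t. U t p) = c"
        using pmf_with_expectation_between[where g="\<lambda>t. U t p", OF \<open>U t1 p \<le> c\<close> \<open>c \<le> U t2 p\<close>] by blast
      with \<open>t1 \<in> Theta\<close> \<open>t2 \<in> Theta\<close> True show ?thesis by (intro exI[of _ L]) auto
    next
      case False
      then obtain t where "t \<in> Theta" "U t p < c" using below \<open>p \<in> Pol\<close> by blast
      with False show ?thesis by (intro exI[of _ "return_pmf t"]) simp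
    qed
  qed
  then obtain Lambda where Lambda: "\<forall>p \<in> Pol. set_pmf (Lambda p) \<subseteq> Theta \<and>
          (p \<in> M \<longrightarrow> measure_pmf.expectation (Lambda p) (\<lambda>t. U t p) = c) \<and>
          (p \<notin> M \<longrightarrow> measure_pmf.expectation (Lambda p) (\<lambda>t. U t p) < c)"
    by (rule bchoice[elim_format]) blast
  have "M \<subseteq> Pol" unfolding M_def by (rule minimax_regret_subset)
  moreover have "M \<noteq> {}" unfolding M_def using assms(1,2) by (rule minimax_regret_nonempty)
  ultimately have "arg_max_set Pol (\<lambda>p. measure_pmf.expectation (Lambda p) (\<lambda>t. U t p)) = M"
  proof (rule arg_max_set_eq_level_set)
    show "measure_pmf.expectation (Lambda p) (\<lambda>t. U t p) = c" if "p \<in> M" for p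
      using Lambda that \<open>M \<subseteq> Pol\<close> by blast
    show "measure_pmf.expectation (Lambda p) (\<lambda>t. U t p) < c" if "p \<in> Pol" "p \<notin> M" for p
      using Lambda that by blast
  qed
  moreover have "\<forall>p \<in> Pol. set_pmf (Lambda p) \<subseteq> Theta" using Lambda by blast
  ultimately show ?thesis unfolding M_def by blast
qed

end
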